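(* Let $G$ be a directed acyclic graph on $[n]$ and $H\subseteq G$ a subgraph. Then $\tilde Q_H$ is a face of $\tilde Q_G$ if and only if the multigraph $H_{comp}$ is loopless and has no directed cycles.
   Context: Conventions: $G$ is a directed acyclic graph with vertex set $[n]$, every edge $(i,j)\in E(G)$ satisfying $i<j$. A subgraph $H\subseteq G$ means $V(H)=[n]$ and $E(H)\subseteq E(G)$; $H^{un}$ is the underlying undirected graph of $H$. $\tilde Q_G=\mathrm{conv}(\{\mathbf 0\}\cup\{\mathbf e_i-\mathbf e_j:(i,j)\in E(G)\})\subset\mathbb R^n$, similarly $\tilde Q_H$. The directed multigraph $H_{comp}$ has as vertices the connected components of $H^{un}$, and for each edge $(u,v)\in E(G)\setminus E(H)$ one edge from the component containing $u$ to the component containing $v$ (so $H_{comp}$ may have multiple edges, loops, and directed cycles). *)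

theory Defs
  imports "HOL-Analysis.Analysis"
begin

text \<open>Vertices of the graph are the elements of a finite linearly ordered type 'n
  (standing for [n] with its usual order); R^n is real^'n, e_i = axis i 1.
  A graph is given by its edge set, a set of ordered pairs of vertices.\<close>

definition is_dag_graph :: "('n::{finite,linorder} \<times> 'n) set \<Rightarrow> bool" where
  "is_dag_graph E \<longleftrightarrow> (\<forall>(i,j)\<in>E. i < j)"

definition Qtilde :: "('n::{finite,linorder} \<times> 'n) set \<Rightarrow> (real ^ ('n::{finite,linorder})) set" where
  "Qtilde E = convex hull (insert 0 {axis i (1::real) - axis j 1 | i j. (i,j) \<in> E})"

definition und_comp :: "('n \<times> 'n) set \<Rightarrow> 'n \<Rightarrow> 'n set" where
  "und_comp H u = {v. (u,v) \<in> (H \<union> H\<inverse>)\<^sup>*}"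

text \<open>Edge relation of the multigraph H_comp (multiplicities are irrelevant for
  looplessness and directed cycles).\<close>
definition comp_edges :: "('n \<times> 'n) set \<Rightarrow> ('n \<times> 'n) set \<Rightarrow> ('n set \<times> 'n set) set" where
  "comp_edges G H = {(und_comp H u, und_comp H v) | u v. (u,v) \<in> G - H}"

definition comp_loopless :: "('n \<times> 'n) set \<Rightarrow> ('n \<times> 'n) set \<Rightarrow> bool" where
  "comp_loopless G H \<longleftrightarrow> (\<forall>(a,b)\<in>comp_edges G H. a \<noteq> b)"

definition comp_no_dicycle :: "('n \<times> 'n) set \<Rightarrow> ('n \<times> 'n) set \<Rightarrow> bool" where
  "comp_no_dicycle G H \<longleftrightarrow> acyclic (comp_edges G H)"

end

theory Submission
  imports Defs
begin

text \<open>A linear functional a on R^n is a vertex weight w = ($) a, with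
  a \<bullet> (e_i - e_j) = w i - w j. Every face of the polytope Q~_G is exposed, and a hyperplane
  exposing Q~_H passes through 0, so Q~_H is a face exactly when some weight is constant along
  the edges of H and strictly increasing along the edges of G - H; the strictness uses that
  no e_i - e_j with (i,j) in G - H lies in Q~_H, which needs acyclicity of G. Such a weight is
  constant on the components of H, hence is a weight on H_comp strictly increasing along its
  edges, and one exists iff H_comp is acyclic: count the strict predecessors of a component.\<close>

definition Qtilde_generators :: "('n::finite \<times> 'n) set \<Rightarrow> (real ^ 'n) set" where
  "Qtilde_generators E = insert 0 ((\<lambda>(i,j). axis i 1 - axis j 1) ` E)"

definition separating_weight :: "('n \<times> 'n) set \<Rightarrow> ('n \<times> 'n) set \<Rightarrow> ('n \<Rightarrow> real) \<Rightarrow> bool" where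
  "separating_weight G H w \<longleftrightarrow>
     (\<forall>u v. (u,v) \<in> H \<longrightarrow> w u = w v) \<and> (\<forall>u v. (u,v) \<in> G - H \<longrightarrow> w u < w v)"

lemma separating_weight_eq: "separating_weight G H w \<Longrightarrow> (u,v) \<in> H \<Longrightarrow> w u = w v"
  unfolding separating_weight_def by blast

lemma separating_weight_less:
  "separating_weight G H w \<Longrightarrow> (u,v) \<in> G \<Longrightarrow> (u,v) \<notin> H \<Longrightarrow> w u < w v"
  unfolding separating_weight_def by blast

lemma Qtilde_eq_convex_hull_generators: "Qtilde E = convex hull Qtilde_generators E"
  unfolding Qtilde_def Qtilde_generators_def by (auto intro!: arg_cong[where f = "\<lambda>S. convex hull S"])

lemma finite_Qtilde_generators: "finite (Qtilde_generators E)"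
  unfolding Qtilde_generators_def by simp

lemma zero_in_Qtilde: "0 \<in> Qtilde E"
  unfolding Qtilde_eq_convex_hull_generators Qtilde_generators_def by (simp add: hull_inc)

lemma edge_vector_in_Qtilde: "(i,j) \<in> E \<Longrightarrow> axis i 1 - axis j 1 \<in> Qtilde E"
  unfolding Qtilde_eq_convex_hull_generators Qtilde_generators_def by (rule hull_inc) auto

lemma polytope_Qtilde: "polytope (Qtilde E)"
  unfolding Qtilde_eq_convex_hull_generators
  by (rule polytope_convex_hull[OF finite_Qtilde_generators])

lemma inner_axis_diff: "(a::real^'n) \<bullet> (axis i 1 - axis j 1) = a $ i - a $ j"
  by (simp add: inner_diff_right inner_axis)

lemma convex_hull_subset_halfspace_le:
  "S \<subseteq> {x. a \<bullet> x \<le> b} \<Longrightarrow> convex hull S \<subseteq> {x. a \<bullet> x \<le> b}"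
  by (rule hull_minimal) (auto simp: convex_halfspace_le)

lemma convex_hull_Int_supporting_hyperplane:
  fixes S :: "'a::euclidean_space set"
  assumes "compact S" and S_le: "S \<subseteq> {x. a \<bullet> x \<le> b}"
  shows "convex hull S \<inter> {x. a \<bullet> x = b} = convex hull (S \<inter> {x. a \<bullet> x = b})"
proof
  have "(convex hull S \<inter> {x. a \<bullet> x = b}) face_of convex hull S"
    using convex_hull_subset_halfspace_le[OF S_le]
    by (intro face_of_Int_supporting_hyperplane_le) auto
  then obtain S' where "S' \<subseteq> S" and S': "convex hull S \<inter> {x. a \<bullet> x = b} = convex hull S'"
    using face_of_convex_hull_subset[OF \<open>compact S\<close>] by metis
  moreover have "S' \<subseteq> {x. a \<bullet> x = b}"
    using S' hull_subset[of S' convex] by blast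
  ultimately show "convex hull S \<inter> {x. a \<bullet> x = b} \<subseteq> convex hull (S \<inter> {x. a \<bullet> x = b})"
    by (metis hull_mono le_inf_iff)
  show "convex hull (S \<inter> {x. a \<bullet> x = b}) \<subseteq> convex hull S \<inter> {x. a \<bullet> x = b}"
    by (simp add: hull_minimal hull_mono convex_hyperplane)
qed

text \<open>The functional e_i - e_j is at most 1 on Q~_H but equals 2 at e_i - e_j: on a generator
  e_k - e_l with k < l it can only take the value 2 if (k,l) = (i,j).\<close>
lemma edge_vector_notin_Qtilde:
  fixes H :: "('n::{finite,linorder} \<times> 'n) set"
  assumes dag: "is_dag_graph H" and "i < j" and "(i,j) \<notin> H"
  shows "axis i 1 - axis j 1 \<notin> Qtilde H"
proof
  define c where "c = axis i (1::real) - axis j 1"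
  have c_nth: "c $ k = (if k = i then 1 else 0) - (if k = j then 1 else 0)" for k
    unfolding c_def by (simp add: axis_def)
  have "Qtilde_generators H \<subseteq> {x. c \<bullet> x \<le> 1}"
  proof
    fix x assume "x \<in> Qtilde_generators H"
    then consider "x = 0" | k l where "(k,l) \<in> H" "x = axis k 1 - axis l 1"
      unfolding Qtilde_generators_def by auto
    then show "x \<in> {x. c \<bullet> x \<le> 1}"
    proof cases
      case 2
      then have "k < l" "(k,l) \<noteq> (i,j)"
        using dag \<open>(i,j) \<notin> H\<close> unfolding is_dag_graph_def by auto
      then show ?thesis using 2 \<open>i < j\<close> by (auto simp: inner_axis_diff c_nth)
    qed simp
  qed
  then have "Qtilde H \<subseteq> {x. c \<bullet> x \<le> 1}"
    unfolding Qtilde_eq_convex_hull_generators by (rule convex_hull_subset_halfspace_le)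
  moreover assume "axis i 1 - axis j 1 \<in> Qtilde H"
  moreover have "c \<bullet> c = 2"
    using \<open>i < j\<close> by (simp add: c_def[symmetric] inner_axis_diff[of c i j, folded c_def] c_nth)
  ultimately show False
    unfolding c_def by auto
qed

lemma face_of_Qtilde_imp_separating_weight:
  fixes G H :: "('n::{finite,linorder} \<times> 'n) set"
  assumes dag: "is_dag_graph G" and "H \<subseteq> G" and face: "Qtilde H face_of Qtilde G"
  shows "\<exists>w. separating_weight G H w"
proof -
  obtain a b where le: "Qtilde G \<subseteq> {x. a \<bullet> x \<le> b}" and eq: "Qtilde H = Qtilde G \<inter> {x. a \<bullet> x = b}"
    using face exposed_face_of_polyhedron[OF polytope_imp_polyhedron[OF polytope_Qtilde]]
    unfolding exposed_face_of_def by blast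
  have "b = 0"
    using eq zero_in_Qtilde[of H] by auto
  have "separating_weight G H (($) a)"
    unfolding separating_weight_def
  proof (intro conjI allI impI)
    fix u v assume "(u,v) \<in> H"
    then show "a $ u = a $ v"
      using edge_vector_in_Qtilde[of u v H] eq \<open>b = 0\<close> by (auto simp: inner_axis_diff)
  next
    fix u v assume "(u,v) \<in> G - H"
    then have uv: "(u,v) \<in> G" "(u,v) \<notin> H" by auto
    have "is_dag_graph H" "u < v"
      using dag \<open>H \<subseteq> G\<close> uv unfolding is_dag_graph_def by auto
    have "a $ u - a $ v \<le> 0"
      using edge_vector_in_Qtilde[OF uv(1)] le \<open>b = 0\<close> by (auto simp: inner_axis_diff)
    moreover have "a $ u - a $ v \<noteq> 0"
      using edge_vector_in_Qtilde[OF uv(1)] edge_vector_notin_Qtilde[OF \<open>is_dag_graph H\<close> \<open>u < v\<close> uv(2)]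
        eq \<open>b = 0\<close>
      by (auto simp: inner_axis_diff)
    ultimately show "a $ u < a $ v" by simp
  qed
  then show ?thesis by blast
qed

lemma separating_weight_imp_face_of_Qtilde:
  fixes G H :: "('n::{finite,linorder} \<times> 'n) set"
  assumes "H \<subseteq> G" and sep: "separating_weight G H w"
  shows "Qtilde H face_of Qtilde G"
proof -
  define a where "a = (\<chi> k. w k)"
  have a_edge: "a \<bullet> (axis i 1 - axis j 1) = w i - w j" for i j
    by (simp add: inner_axis_diff a_def)
  have w_le: "w i \<le> w j" if "(i,j) \<in> G" for i j
    using separating_weight_eq[OF sep] separating_weight_less[OF sep that] by fastforce
  have w_eq_iff: "w i = w j \<longleftrightarrow> (i,j) \<in> H" if "(i,j) \<in> G" for i j
    using separating_weight_eq[OF sep] separating_weight_less[OF sep that] by fastforce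
  have gens_le: "Qtilde_generators G \<subseteq> {x. a \<bullet> x \<le> 0}"
    unfolding Qtilde_generators_def by (auto simp: a_edge w_le)
  have "Qtilde_generators G \<inter> {x. a \<bullet> x = 0} = Qtilde_generators H"
    using \<open>H \<subseteq> G\<close> unfolding Qtilde_generators_def by (auto simp: a_edge w_eq_iff)
  then have "Qtilde G \<inter> {x. a \<bullet> x = 0} = Qtilde H"
    unfolding Qtilde_eq_convex_hull_generators
    by (simp add: convex_hull_Int_supporting_hyperplane[OF
          finite_imp_compact[OF finite_Qtilde_generators] gens_le])
  moreover have "(Qtilde G \<inter> {x. a \<bullet> x = 0}) face_of Qtilde G"
    using convex_hull_subset_halfspace_le[OF gens_le]
    by (intro face_of_Int_supporting_hyperplane_le)
       (auto simp: Qtilde_eq_convex_hull_generators)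
  ultimately show ?thesis by simp
qed

lemma und_comp_refl: "u \<in> und_comp H u"
  unfolding und_comp_def by simp

lemma und_comp_eq_if_edge:
  assumes "(u,v) \<in> H"
  shows "und_comp H u = und_comp H v"
proof -
  have "(u,v) \<in> (H \<union> H\<inverse>)\<^sup>*" "(v,u) \<in> (H \<union> H\<inverse>)\<^sup>*"
    using assms by auto
  then show ?thesis
    unfolding und_comp_def by (auto intro: rtrancl_trans)
qed

lemma separating_weight_constant_on_und_comp:
  assumes sep: "separating_weight G H w" and "v \<in> und_comp H u"
  shows "w v = w u"
proof -
  have "(u,v) \<in> (H \<union> H\<inverse>)\<^sup>*"
    using assms(2) unfolding und_comp_def by simp
  then show ?thesis
    by induction (auto dest: separating_weight_eq[OF sep])
qed

lemma separating_weight_imp_acyclic: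
  assumes sep: "separating_weight G H w"
  shows "acyclic (comp_edges G H)"
proof (rule acyclicI_order)
  fix X Y assume "(X,Y) \<in> comp_edges G H"
  then obtain u v where "X = und_comp H u" "Y = und_comp H v" "(u,v) \<in> G" "(u,v) \<notin> H"
    unfolding comp_edges_def by blast
  moreover have "w (SOME x. x \<in> und_comp H z) = w z" for z
    using someI[of "\<lambda>x. x \<in> und_comp H z", OF und_comp_refl]
    by (rule separating_weight_constant_on_und_comp[OF sep])
  ultimately show "- w (SOME y. y \<in> Y) < - w (SOME x. x \<in> X)"
    using separating_weight_less[OF sep] by simp
qed

lemma card_trancl_predecessors_less:
  fixes r :: "('a::finite \<times> 'a) set"
  assumes "acyclic r" and "(x,y) \<in> r"
  shows "card {z. (z,x) \<in> r\<^sup>+} < card {z. (z,y) \<in> r\<^sup>+}"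
proof (rule psubset_card_mono)
  have "{z. (z,x) \<in> r\<^sup>+} \<subseteq> {z. (z,y) \<in> r\<^sup>+}"
    using assms(2) by (auto intro: trancl_into_trancl)
  moreover have "x \<in> {z. (z,y) \<in> r\<^sup>+} - {z. (z,x) \<in> r\<^sup>+}"
    using assms unfolding acyclic_def by auto
  ultimately show "{z. (z,x) \<in> r\<^sup>+} \<subset> {z. (z,y) \<in> r\<^sup>+}"
    by blast
qed simp

lemma acyclic_imp_separating_weight:
  fixes G H :: "('n::finite \<times> 'n) set"
  assumes "acyclic (comp_edges G H)"
  shows "separating_weight G H (\<lambda>u. real (card {C. (C, und_comp H u) \<in> (comp_edges G H)\<^sup>+}))"
  unfolding separating_weight_def
proof (intro conjI allI impI)
  fix u v assume "(u,v) \<in> H"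
  then show "real (card {C. (C, und_comp H u) \<in> (comp_edges G H)\<^sup>+})
           = real (card {C. (C, und_comp H v) \<in> (comp_edges G H)\<^sup>+})"
    by (simp add: und_comp_eq_if_edge)
next
  fix u v assume "(u,v) \<in> G - H"
  then have "(und_comp H u, und_comp H v) \<in> comp_edges G H"
    unfolding comp_edges_def by blast
  then show "real (card {C. (C, und_comp H u) \<in> (comp_edges G H)\<^sup>+})
           < real (card {C. (C, und_comp H v) \<in> (comp_edges G H)\<^sup>+})"
    using card_trancl_predecessors_less[OF assms] by simp
qed

lemma comp_no_dicycle_imp_comp_loopless: "comp_no_dicycle G H \<Longrightarrow> comp_loopless G H"
  unfolding comp_no_dicycle_def comp_loopless_def acyclic_def by blast

theorem mainTheorem5:
  fixes G H :: "('n::{finite,linorder} \<times> 'n) set"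
  assumes "is_dag_graph G" and "H \<subseteq> G"
  shows "Qtilde H face_of Qtilde G \<longleftrightarrow> comp_loopless G H \<and> comp_no_dicycle G H"
proof -
  have "Qtilde H face_of Qtilde G \<longleftrightarrow> (\<exists>w. separating_weight G H w)"
    using face_of_Qtilde_imp_separating_weight separating_weight_imp_face_of_Qtilde assms
    by blast
  also have "\<dots> \<longleftrightarrow> comp_no_dicycle G H"
    unfolding comp_no_dicycle_def
    using separating_weight_imp_acyclic acyclic_imp_separating_weight by blast
  also have "\<dots> \<longleftrightarrow> comp_loopless G H \<and> comp_no_dicycle G H"
    using comp_no_dicycle_imp_comp_loopless by blast
  finally show ?thesis .
qed

end
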